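(* Consider a hierarchical tensor factorization with mode tree $\mathcal T$ whose weight matrices evolve under gradient flow on $\phi_H$ for $t\ge0$, and assume the unbalancedness magnitude at initialization is $\epsilon\ge0$. Let $L_\nu:=|C(\nu)|+1$. Then for any $\nu\in\mathrm{int}(\mathcal T)$, $r\in[R_\nu]$ and time $t\ge0$ at which $\sigma_{\nu,r}(t)>0$, writing $g(t):=\langle-\nabla\mathcal L_H(\mathcal W_H(t)),\mathcal E_{\nu,r}(t)\rangle$: if $g(t)\ge0$ then $$\frac{\sigma_{\nu,r}(t)^2}{\sigma_{\nu,r}(t)^{2/L_\nu}+\epsilon}\,L_\nu\, g(t)\;\le\;\frac{d}{dt}\sigma_{\nu,r}(t)\;\le\;\big(\sigma_{\nu,r}(t)^{2/L_\nu}+\epsilon\big)^{L_\nu-1}L_\nu\, g(t);$$ and if $g(t)<0$ then $$\big(\sigma_{\nu,r}(t)^{2/L_\nu}+\epsilon\big)^{L_\nu-1}L_\nu\, g(t)\;\le\;\frac{d}{dt}\sigma_{\nu,r}(t)\;\le\;\frac{\sigma_{\nu,r}(t)^2}{\sigma_{\nu,r}(t)^{2/L_\nu}+\epsilon}\,L_\nu\, g(t).$$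
   Context: Fix $N\in\mathbb N$, $D_1,\dots,D_N\in\mathbb N$; $[K]:=\{1,\dots,K\}$. Norms are Frobenius norms, $\langle\cdot,\cdot\rangle$ the entrywise inner product, $\otimes$ the tensor product. A mode tree $\mathcal T$ over $[N]$ is a rooted tree whose nodes are labeled by subsets of $[N]$, with exactly $N$ leaves labeled $\{1\},\dots,\{N\}$, and where each interior node's label is the union of its children's labels; nodes are identified with labels, root $[N]$, $\mathrm{int}(\mathcal T)$ interior nodes, $Pa(\nu)$ parent, $C(\nu)$ children (fixed order). A hierarchical tensor factorization is given by $R_\nu\in\mathbb N$ ($\nu\in\mathrm{int}(\mathcal T)$), with $R_{Pa([N])}:=1$, $R_{\{n\}}:=D_n$, and weight matrices $W^{(\nu)}\in\mathbb R^{R_\nu\times R_{Pa(\nu)}}$. Intermediate tensors: $\mathcal W^{(\{n\},r)}:=W^{(\{n\})}_{:,r}$; for $\nu\in\mathrm{int}(\mathcal T)\setminus\{[N]\}$ (leaves to root), $r\in[R_{Pa(\nu)}]$: $\mathcal W^{(\nu,r)}:=\pi_\nu\big(\sum_{r'=1}^{R_\nu}W^{(\nu)}_{r',r}\bigotimes_{\nu_c\in C(\nu)}\mathcal W^{(\nu_c,r')}\big)$; end tensor $\mathcal W_H:=\pi_{[N]}\big(\sum_{r'=1}^{R_{[N]}}W^{([N])}_{r',1}\bigotimes_{\nu_c\in C([N])}\mathcal W^{(\nu_c,r')}\big)$, where $\pi_\nu$ permutes modes (ordered by children, each child's elements ascending) into ascending order of the elements of $\nu$. $\mathrm{LC}(\nu,r)$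 is the collection of vectors $W^{(\nu)}_{r,:}$ and $W^{(\nu_c)}_{:,r}$, $\nu_c\in C(\nu)$; $\sigma_{\nu,r}:=\prod_{w\in\mathrm{LC}(\nu,r)}\|w\|$ is the norm of the local component $W^{(\nu)}_{r,:}\otimes\bigotimes_{\nu_c}W^{(\nu_c)}_{:,r}$. $\mathcal E_{\nu,r}$ is the end tensor obtained from the same construction except that, for every $r'\in[R_{Pa(\nu)}]$, the tensor produced at node $\nu$ (the end tensor itself if $\nu=[N]$) is replaced by $\pi_\nu\big(\sigma_{\nu,r}^{-1}W^{(\nu)}_{r,r'}\bigotimes_{\nu_c\in C(\nu)}\mathcal W^{(\nu_c,r)}\big)$; $\mathcal E_{\nu,r}:=0$ if $\sigma_{\nu,r}=0$. $\mathcal L_H:\mathbb R^{D_1\times\cdots\times D_N}\to\mathbb R_{\ge0}$ is differentiable and locally smooth, $\phi_H((W^{(\nu)})_\nu):=\mathcal L_H(\mathcal W_H)$, gradient flow: $\frac{d}{dt}W^{(\nu)}(t)=-\frac{\partial}{\partial W^{(\nu)}}\phi_H((W^{(\nu')}(t))_{\nu'})$, $t\ge0$; time-$t$ quantities are computed from the weights at time $t$. The unbalancedness magnitude is $\max_{\nu\in\mathrm{int}(\mathcal T),r\in[R_\nu],w,w'\in\mathrm{LC}(\nu,r)}|\|w\|^2-\|w'\|^2|$. *)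

theory Defs
  imports "HOL-Analysis.Analysis"
begin

text \<open>A tensor in R^(D_1 x ... x D_N) is a function from index assignments (mode n to
  0-based index i n < D n) to reals; only assignments in tidx N D matter.  Modes are
  addressed by their label, so the mode permutations pi_nu are implicit.\<close>

definition tidx :: "nat \<Rightarrow> (nat \<Rightarrow> nat) \<Rightarrow> (nat \<Rightarrow> nat) set" where
  "tidx N D = PiE {1..N} (\<lambda>n. {..<D n})"

definition tinner :: "nat \<Rightarrow> (nat \<Rightarrow> nat) \<Rightarrow> ((nat \<Rightarrow> nat) \<Rightarrow> real) \<Rightarrow> ((nat \<Rightarrow> nat) \<Rightarrow> real) \<Rightarrow> real" where
  "tinner N D X Y = (\<Sum>i\<in>tidx N D. X i * Y i)"

definition tnorm :: "nat \<Rightarrow> (nat \<Rightarrow> nat) \<Rightarrow> ((nat \<Rightarrow> nat) \<Rightarrow> real) \<Rightarrow> real" where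
  "tnorm N D X = sqrt (tinner N D X X)"

definition has_tgrad :: "nat \<Rightarrow> (nat \<Rightarrow> nat) \<Rightarrow> (((nat \<Rightarrow> nat) \<Rightarrow> real) \<Rightarrow> real)
     \<Rightarrow> ((nat \<Rightarrow> nat) \<Rightarrow> real) \<Rightarrow> ((nat \<Rightarrow> nat) \<Rightarrow> real) \<Rightarrow> bool" where
  "has_tgrad N D L G X \<longleftrightarrow>
     (\<forall>e>0. \<exists>d>0. \<forall>H. tnorm N D H < d \<longrightarrow>
        \<bar>L (\<lambda>i. X i + H i) - L X - tinner N D G H\<bar> \<le> e * tnorm N D H)"

definition locally_smooth_grad :: "nat \<Rightarrow> (nat \<Rightarrow> nat)
     \<Rightarrow> (((nat \<Rightarrow> nat) \<Rightarrow> real) \<Rightarrow> ((nat \<Rightarrow> nat) \<Rightarrow> real)) \<Rightarrow> bool" where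
  "locally_smooth_grad N D G \<longleftrightarrow>
     (\<forall>X. \<exists>\<delta>>0. \<exists>K. \<forall>Y Z. tnorm N D (\<lambda>i. Y i - X i) < \<delta> \<longrightarrow> tnorm N D (\<lambda>i. Z i - X i) < \<delta> \<longrightarrow>
         tnorm N D (\<lambda>i. G Y i - G Z i) \<le> K * tnorm N D (\<lambda>i. Y i - Z i))"

text \<open>Nodes are identified with their labels; a mode tree over [N] is a laminar family
  of nonempty subsets of [N] containing [N] and all singletons.\<close>
definition mode_tree :: "nat \<Rightarrow> nat set set \<Rightarrow> bool" where
  "mode_tree N T \<longleftrightarrow> T \<subseteq> Pow {1..N} \<and> {1..N} \<in> T \<and> (\<forall>n\<in>{1..N}. {n} \<in> T) \<and> {} \<notin> T \<and>
     (\<forall>A\<in>T. \<forall>B\<in>T. A \<subseteq> B \<or> B \<subseteq> A \<or> A \<inter> B = {})"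

definition children :: "nat set set \<Rightarrow> nat set \<Rightarrow> nat set set" where
  "children T \<nu> = {\<mu>\<in>T. \<mu> \<subset> \<nu> \<and> \<not> (\<exists>\<kappa>\<in>T. \<mu> \<subset> \<kappa> \<and> \<kappa> \<subset> \<nu>)}"

definition parent :: "nat set set \<Rightarrow> nat set \<Rightarrow> nat set" where
  "parent T \<nu> = (THE \<kappa>. \<kappa> \<in> T \<and> \<nu> \<subset> \<kappa> \<and> (\<forall>\<kappa>'\<in>T. \<nu> \<subset> \<kappa>' \<longrightarrow> \<kappa> \<subseteq> \<kappa>'))"

definition interior :: "nat set set \<Rightarrow> nat set set" where
  "interior T = {\<nu>\<in>T. \<not> (\<exists>n. \<nu> = {n})}"

definition rk :: "(nat set \<Rightarrow> nat) \<Rightarrow> (nat \<Rightarrow> nat) \<Rightarrow> nat set \<Rightarrow> nat" where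
  "rk R D \<nu> = (if \<exists>n. \<nu> = {n} then D (the_elem \<nu>) else R \<nu>)"

definition prk :: "nat \<Rightarrow> nat set set \<Rightarrow> (nat set \<Rightarrow> nat) \<Rightarrow> (nat \<Rightarrow> nat) \<Rightarrow> nat set \<Rightarrow> nat" where
  "prk N T R D \<nu> = (if \<nu> = {1..N} then 1 else rk R D (parent T \<nu>))"

text \<open>Weights: W nu a b is entry (a,b) (0-based) of W^(nu).  tens T rk W c nu r is the
  intermediate tensor W^(nu,r), where summand r' at node mu is multiplied by c mu r'
  (c = 1 gives the ordinary construction).\<close>
function tens :: "nat set set \<Rightarrow> (nat set \<Rightarrow> nat) \<Rightarrow> (nat set \<Rightarrow> nat \<Rightarrow> nat \<Rightarrow> real)
    \<Rightarrow> (nat set \<Rightarrow> nat \<Rightarrow> real) \<Rightarrow> nat set \<Rightarrow> nat \<Rightarrow> (nat \<Rightarrow> nat) \<Rightarrow> real" where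
  "tens T rkf W c \<nu> r i =
     (if finite \<nu> \<and> card \<nu> = 1 then W \<nu> (i (the_elem \<nu>)) r
      else if finite \<nu> \<and> 2 \<le> card \<nu> then
        (\<Sum>r'<rkf \<nu>. c \<nu> r' * W \<nu> r' r * (\<Prod>\<mu>\<in>children T \<nu>. tens T rkf W c \<mu> r' i))
      else 0)"
  by pat_completeness auto
termination
  by (relation "Wellfounded.measure (\<lambda>(T,rkf,W,c,\<nu>,r,i). card \<nu>)")
     (auto simp: children_def intro: psubset_card_mono)

definition end_tensor :: "nat \<Rightarrow> (nat \<Rightarrow> nat) \<Rightarrow> nat set set \<Rightarrow> (nat set \<Rightarrow> nat)
    \<Rightarrow> (nat set \<Rightarrow> nat \<Rightarrow> nat \<Rightarrow> real) \<Rightarrow> (nat \<Rightarrow> nat) \<Rightarrow> real" where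
  "end_tensor N D T R W = tens T (rk R D) W (\<lambda>_ _. 1) {1..N} 0"

text \<open>sigma_{nu,r}: product of the norms of the local-component vectors.\<close>
definition row_sqnorm :: "nat \<Rightarrow> nat set set \<Rightarrow> (nat set \<Rightarrow> nat) \<Rightarrow> (nat \<Rightarrow> nat)
    \<Rightarrow> (nat set \<Rightarrow> nat \<Rightarrow> nat \<Rightarrow> real) \<Rightarrow> nat set \<Rightarrow> nat \<Rightarrow> real" where
  "row_sqnorm N T R D W \<nu> r = (\<Sum>r'<prk N T R D \<nu>. (W \<nu> r r')\<^sup>2)"

definition col_sqnorm :: "(nat set \<Rightarrow> nat) \<Rightarrow> (nat \<Rightarrow> nat)
    \<Rightarrow> (nat set \<Rightarrow> nat \<Rightarrow> nat \<Rightarrow> real) \<Rightarrow> nat set \<Rightarrow> nat \<Rightarrow> real" where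
  "col_sqnorm R D W \<mu> r = (\<Sum>a<rk R D \<mu>. (W \<mu> a r)\<^sup>2)"

definition sigma :: "nat \<Rightarrow> nat set set \<Rightarrow> (nat set \<Rightarrow> nat) \<Rightarrow> (nat \<Rightarrow> nat)
    \<Rightarrow> (nat set \<Rightarrow> nat \<Rightarrow> nat \<Rightarrow> real) \<Rightarrow> nat set \<Rightarrow> nat \<Rightarrow> real" where
  "sigma N T R D W \<nu> r =
     sqrt (row_sqnorm N T R D W \<nu> r) * (\<Prod>\<mu>\<in>children T \<nu>. sqrt (col_sqnorm R D W \<mu> r))"

definition E_tensor :: "nat \<Rightarrow> (nat \<Rightarrow> nat) \<Rightarrow> nat set set \<Rightarrow> (nat set \<Rightarrow> nat)
    \<Rightarrow> (nat set \<Rightarrow> nat \<Rightarrow> nat \<Rightarrow> real) \<Rightarrow> nat set \<Rightarrow> nat \<Rightarrow> (nat \<Rightarrow> nat) \<Rightarrow> real" where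
  "E_tensor N D T R W \<nu> r =
     (if sigma N T R D W \<nu> r = 0 then (\<lambda>_. 0)
      else tens T (rk R D) W
        (\<lambda>\<mu> r'. if \<mu> = \<nu> then (if r' = r then 1 / sigma N T R D W \<nu> r else 0) else 1) {1..N} 0)"

definition LC_sqnorms :: "nat \<Rightarrow> nat set set \<Rightarrow> (nat set \<Rightarrow> nat) \<Rightarrow> (nat \<Rightarrow> nat)
    \<Rightarrow> (nat set \<Rightarrow> nat \<Rightarrow> nat \<Rightarrow> real) \<Rightarrow> nat set \<Rightarrow> nat \<Rightarrow> real set" where
  "LC_sqnorms N T R D W \<nu> r =
     insert (row_sqnorm N T R D W \<nu> r) ((\<lambda>\<mu>. col_sqnorm R D W \<mu> r) ` children T \<nu>)"

definition unbalancedness :: "nat \<Rightarrow> nat set set \<Rightarrow> (nat set \<Rightarrow> nat) \<Rightarrow> (nat \<Rightarrow> nat)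
    \<Rightarrow> (nat set \<Rightarrow> nat \<Rightarrow> nat \<Rightarrow> real) \<Rightarrow> real" where
  "unbalancedness N T R D W =
     Max {\<bar>a - b\<bar> | \<nu> r a b. \<nu> \<in> interior T \<and> r < R \<nu> \<and>
            a \<in> LC_sqnorms N T R D W \<nu> r \<and> b \<in> LC_sqnorms N T R D W \<nu> r}"

definition upd_entry :: "(nat set \<Rightarrow> nat \<Rightarrow> nat \<Rightarrow> real) \<Rightarrow> nat set \<Rightarrow> nat \<Rightarrow> nat \<Rightarrow> real
    \<Rightarrow> (nat set \<Rightarrow> nat \<Rightarrow> nat \<Rightarrow> real)" where
  "upd_entry W \<nu> a b x = W(\<nu> := (W \<nu>)(a := (W \<nu> a)(b := x)))"

definition gradient_flow :: "nat \<Rightarrow> (nat \<Rightarrow> nat) \<Rightarrow> nat set set \<Rightarrow> (nat set \<Rightarrow> nat)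
    \<Rightarrow> (((nat \<Rightarrow> nat) \<Rightarrow> real) \<Rightarrow> real) \<Rightarrow> (real \<Rightarrow> nat set \<Rightarrow> nat \<Rightarrow> nat \<Rightarrow> real) \<Rightarrow> bool" where
  "gradient_flow N D T R L W \<longleftrightarrow>
     (\<forall>t\<ge>0. \<forall>\<nu>\<in>T. \<forall>a<rk R D \<nu>. \<forall>b<prk N T R D \<nu>. \<exists>d.
        ((\<lambda>s. W s \<nu> a b) has_real_derivative d) (at t within {0..}) \<and>
        ((\<lambda>x. L (end_tensor N D T R (upd_entry (W t) \<nu> a b x))) has_real_derivative (- d))
           (at (W t \<nu> a b)))"

end

theory Submission
  imports Defs
begin

text \<open>Along the gradient flow, the squared norms q_j of the L_\<nu> vectors in LC(\<nu>, r) all have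
  the same time derivative 2 \<sigma> g: the end tensor is linear in each of these vectors, and by
  Euler's identity each of them accounts for the same part \<sigma> E of the end tensor. Hence the
  differences q_j - q_k are conserved and stay bounded by \<epsilon>. Since the smallest q_j is at most
  the geometric mean \<sigma>^(2/L_\<nu>), every q_j is at most \<sigma>^(2/L_\<nu>) + \<epsilon>. Differentiating
  \<sigma> = \<Prod>_j sqrt q_j gives \<sigma>' = g \<Sum>_j \<Prod>_(k \<noteq> j) q_k, and each of these products lies between
  \<sigma>^2 / (\<sigma>^(2/L_\<nu>) + \<epsilon>) and (\<sigma>^(2/L_\<nu>) + \<epsilon>)^(L_\<nu> - 1).\<close>

section \<open>Tensor calculus and elementary estimates\<close>

lemma tinner_scale_right: "tinner N D G (\<lambda>i. h * V i) = h * tinner N D G V"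
  by (simp add: tinner_def sum_distrib_left mult_ac)

lemma tinner_uminus_left: "tinner N D (\<lambda>i. - G i) V = - tinner N D G V"
  by (simp add: tinner_def sum_negf)

lemma tinner_sum_right:
  "tinner N D G (\<lambda>i. \<Sum>b\<in>S. f b * V b i) = (\<Sum>b\<in>S. f b * tinner N D G (V b))"
  by (simp add: tinner_def sum_distrib_left sum.swap[of _ S] mult_ac)

lemma tinner_cong_right:
  "(\<And>i. i \<in> tidx N D \<Longrightarrow> V i = V' i) \<Longrightarrow> tinner N D G V = tinner N D G V'"
  by (simp add: tinner_def)

lemma tnorm_nonneg: "0 \<le> tnorm N D V"
  by (simp add: tnorm_def tinner_def sum_nonneg)

lemma tnorm_scale: "tnorm N D (\<lambda>i. h * V i) = \<bar>h\<bar> * tnorm N D V"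
proof -
  have "tinner N D (\<lambda>i. h * V i) (\<lambda>i. h * V i) = h\<^sup>2 * tinner N D V V"
    by (simp add: tinner_def sum_distrib_left power2_eq_square mult_ac)
  then show ?thesis by (simp add: tnorm_def real_sqrt_mult)
qed

lemma has_tgrad_line_derivative:
  assumes "has_tgrad N D L G X"
  shows "((\<lambda>x. L (\<lambda>i. X i + (x - x0) * V i)) has_real_derivative tinner N D G V) (at x0)"
  unfolding DERIV_def LIM_eq
proof (intro allI impI)
  fix e :: real assume "0 < e"
  define n where "n = tnorm N D V"
  have "0 \<le> n" by (simp add: n_def tnorm_nonneg)
  then obtain d where "0 < d" and d: "\<And>H. tnorm N D H < d \<Longrightarrow>
      \<bar>L (\<lambda>i. X i + H i) - L X - tinner N D G H\<bar> \<le> e / (n + 1) * tnorm N D H"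
    using assms \<open>0 < e\<close> unfolding has_tgrad_def
    by (metis add_nonneg_pos divide_pos_pos zero_less_one)
  show "\<exists>s>0. \<forall>h. h \<noteq> 0 \<and> norm (h - 0) < s \<longrightarrow>
      norm ((L (\<lambda>i. X i + (x0 + h - x0) * V i) - L (\<lambda>i. X i + (x0 - x0) * V i)) / h
        - tinner N D G V) < e"
  proof (intro exI conjI allI impI)
    show "0 < d / (n + 1)" using \<open>0 < d\<close> \<open>0 \<le> n\<close> by simp
    fix h :: real assume h: "h \<noteq> 0 \<and> norm (h - 0) < d / (n + 1)"
    have "\<bar>h\<bar> * n < d"
      using h \<open>0 \<le> n\<close> by (simp add: pos_less_divide_eq) (smt (verit) mult_left_mono)
    then have "\<bar>L (\<lambda>i. X i + h * V i) - L X - h * tinner N D G V\<bar> \<le> e / (n + 1) * (\<bar>h\<bar> * n)"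
      using d[of "\<lambda>i. h * V i"] by (simp add: tnorm_scale tinner_scale_right n_def)
    then have "\<bar>(L (\<lambda>i. X i + h * V i) - L X) / h - tinner N D G V\<bar> \<le> e / (n + 1) * n"
      using h by (simp add: divide_simps abs_mult_pos' mult_ac split: if_splits)
    also have "\<dots> < e" using \<open>0 < e\<close> \<open>0 \<le> n\<close> by (simp add: divide_simps)
    finally show "norm ((L (\<lambda>i. X i + (x0 + h - x0) * V i) - L (\<lambda>i. X i + (x0 - x0) * V i)) / h
        - tinner N D G V) < e" by simp
  qed
qed

lemma diff_eq_if_equal_derivatives:
  fixes f g :: "real \<Rightarrow> real"
  assumes "\<And>s. 0 \<le> s \<Longrightarrow> (f has_real_derivative h s) (at s within {0..})"
    and "\<And>s. 0 \<le> s \<Longrightarrow> (g has_real_derivative h s) (at s within {0..})"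
    and "0 \<le> t"
  shows "f t - g t = f 0 - g 0"
proof -
  have "((\<lambda>s. f s - g s) has_real_derivative 0) (at s within {0..t})" if "s \<in> {0..t}" for s
    using DERIV_diff[OF assms(1,2), of s] that by (auto intro: DERIV_subset)
  then obtain c where "\<forall>s\<in>{0..t}. f s - g s = c"
    using has_field_derivative_zero_constant[of "{0..t}" "\<lambda>s. f s - g s"] by auto
  then show ?thesis using \<open>0 \<le> t\<close> by auto
qed

lemma has_real_derivative_prod_sqrt:
  fixes q :: "'a \<Rightarrow> real \<Rightarrow> real"
  assumes J: "finite J" and pos: "\<forall>j\<in>J. 0 < q j t"
    and deriv: "\<forall>j\<in>J. (q j has_real_derivative 2 * (\<Prod>j\<in>J. sqrt (q j t)) * g) (at t within S)"
  shows "((\<lambda>s. \<Prod>j\<in>J. sqrt (q j s)) has_real_derivative g * (\<Sum>j\<in>J. \<Prod>k\<in>J - {j}. q k t))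
    (at t within S)"
proof -
  define \<sigma> where "\<sigma> = (\<Prod>j\<in>J. sqrt (q j t))"
  define d where "d j = inverse (sqrt (q j t)) / 2 * (2 * \<sigma> * g)" for j
  have "((\<lambda>s. sqrt (q j s)) has_derivative (*) (d j)) (at t within S)" if "j \<in> J" for j
    using DERIV_chain2[OF DERIV_real_sqrt deriv[rule_format, OF that]] pos that
    by (simp add: d_def \<sigma>_def has_field_derivative_def)
  then have "((\<lambda>s. \<Prod>j\<in>J. sqrt (q j s)) has_derivative
      (\<lambda>y. \<Sum>j\<in>J. d j * y * (\<Prod>k\<in>J - {j}. sqrt (q k t)))) (at t within S)"
    by (rule has_derivative_prod)
  moreover have "d j * y * (\<Prod>k\<in>J - {j}. sqrt (q k t)) = g * (\<Prod>k\<in>J - {j}. q k t) * y"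
    if "j \<in> J" for j y
  proof -
    define P where "P = (\<Prod>k\<in>J - {j}. sqrt (q k t))"
    have "\<sigma> = sqrt (q j t) * P" using J that by (simp add: \<sigma>_def P_def prod.remove)
    moreover have "0 < q j t" using pos that by blast
    ultimately have "d j = g * P" by (simp add: d_def field_simps)
    moreover have "P * P = (\<Prod>k\<in>J - {j}. q k t)"
      unfolding P_def prod.distrib[symmetric] using pos that by (intro prod.cong) auto
    ultimately show ?thesis by (simp add: P_def[symmetric] mult_ac)
  qed
  ultimately have "((\<lambda>s. \<Prod>j\<in>J. sqrt (q j s)) has_derivative
      (\<lambda>y. \<Sum>j\<in>J. g * (\<Prod>k\<in>J - {j}. q k t) * y)) (at t within S)"
    by (simp cong: sum.cong)
  then show ?thesis by (simp add: has_field_derivative_def flip: sum_distrib_right sum_distrib_left)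
qed

lemma le_root_prod_add_if_pairwise_close:
  fixes q :: "'a \<Rightarrow> real"
  assumes J: "finite J" and pos: "\<forall>k\<in>J. 0 < q k"
    and close: "\<forall>j\<in>J. \<forall>k\<in>J. \<bar>q j - q k\<bar> \<le> \<epsilon>" and j: "j \<in> J"
  shows "q j \<le> prod q J powr (1 / card J) + \<epsilon>"
proof -
  define m where "m = Min (q ` J)"
  have "m \<in> q ` J" using J j unfolding m_def by (intro Min_in) auto
  then obtain k where k: "k \<in> J" "m = q k" by auto
  have "0 < m" using pos k by simp
  have "m ^ card J \<le> prod q J"
    using prod_mono[of J "\<lambda>_. m" q] J \<open>0 < m\<close> by (simp add: m_def less_imp_le)
  then have "(m ^ card J) powr (1 / card J) \<le> prod q J powr (1 / card J)"
    using \<open>0 < m\<close> by (intro powr_mono2) auto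
  moreover have "(m ^ card J) powr (1 / card J) = m"
    using \<open>0 < m\<close> J j by (simp add: powr_realpow[symmetric] powr_powr card_gt_0_iff; blast)
  ultimately show ?thesis using close j k by fastforce
qed

lemma sum_prod_remove_bounds:
  fixes q :: "'a \<Rightarrow> real"
  assumes J: "finite J" and pos: "\<forall>j\<in>J. 0 < q j" and le: "\<forall>j\<in>J. q j \<le> S"
  shows "prod q J / S * card J \<le> (\<Sum>j\<in>J. prod q (J - {j}))"
    and "(\<Sum>j\<in>J. prod q (J - {j})) \<le> S ^ (card J - 1) * card J"
proof -
  have "prod q J / S \<le> prod q (J - {j})" if "j \<in> J" for j
  proof -
    have "prod q J = q j * prod q (J - {j})" using J that by (simp add: prod.remove)
    moreover have "0 < prod q (J - {j})" using pos by (intro prod_pos) auto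
    moreover have "0 < S" using pos le that by force
    ultimately show ?thesis using le that by (simp add: pos_divide_le_eq)
  qed
  then show "prod q J / S * card J \<le> (\<Sum>j\<in>J. prod q (J - {j}))"
    using sum_mono[of J "\<lambda>_. prod q J / S"] by (simp add: mult.commute)
  have "prod q (J - {j}) \<le> S ^ (card J - 1)" if "j \<in> J" for j
    using prod_mono[of "J - {j}" q "\<lambda>_. S"] pos le J that by (simp add: less_imp_le card_Diff_singleton)
  then show "(\<Sum>j\<in>J. prod q (J - {j})) \<le> S ^ (card J - 1) * card J"
    using sum_mono[of J _ "\<lambda>_. S ^ (card J - 1)"] by (simp add: mult.commute)
qed

section \<open>Mode trees and locality of the factorization\<close>

declare tens.simps[simp del]

lemma tens_leaf: "finite \<mu> \<Longrightarrow> card \<mu> = 1 \<Longrightarrow> tens T rkf W c \<mu> r i = W \<mu> (i (the_elem \<mu>)) r"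
  by (subst tens.simps) simp

lemma tens_node: "finite \<mu> \<Longrightarrow> 2 \<le> card \<mu> \<Longrightarrow> tens T rkf W c \<mu> r i =
    (\<Sum>r'<rkf \<mu>. c \<mu> r' * W \<mu> r' r * (\<Prod>\<kappa>\<in>children T \<mu>. tens T rkf W c \<kappa> r' i))"
  by (subst tens.simps) simp

lemma children_subset: "\<kappa> \<in> children T \<mu> \<Longrightarrow> \<kappa> \<in> T \<and> \<kappa> \<subset> \<mu>"
  by (auto simp: children_def)

lemma tens_cong_subtree:
  assumes "\<forall>\<kappa>\<in>T. \<kappa> \<subset> \<mu> \<longrightarrow> W' \<kappa> = W \<kappa> \<and> c' \<kappa> = c \<kappa>"
    and "\<forall>a. W' \<mu> a r = W \<mu> a r" and "c' \<mu> = c \<mu>"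
  shows "tens T rkf W' c' \<mu> r i = tens T rkf W c \<mu> r i"
  using assms
proof (induction T rkf W c \<mu> r i rule: tens.induct)
  case (1 T rkf W c \<mu> r i)
  have "tens T rkf W' c' \<kappa> r' i = tens T rkf W c \<kappa> r' i"
    if "finite \<mu>" "2 \<le> card \<mu>" "\<kappa> \<in> children T \<mu>" "r' < rkf \<mu>" for \<kappa> r'
  proof (rule "1.IH")
    show "\<forall>\<kappa>'\<in>T. \<kappa>' \<subset> \<kappa> \<longrightarrow> W' \<kappa>' = W \<kappa>' \<and> c' \<kappa>' = c \<kappa>'" "\<forall>a. W' \<kappa> a r' = W \<kappa> a r'" "c' \<kappa> = c \<kappa>"
      using that children_subset[OF that(3)] "1.prems"(1) by auto
  qed (use that in auto)
  then show ?case
    using "1.prems" by (subst (1 2) tens.simps) (auto intro!: sum.cong prod.cong)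
qed

definition same_outside_subtree :: "nat set set \<Rightarrow> nat set \<Rightarrow> (nat set \<Rightarrow> 'w) \<Rightarrow> (nat set \<Rightarrow> 'c)
    \<Rightarrow> (nat set \<Rightarrow> 'w) \<Rightarrow> (nat set \<Rightarrow> 'c) \<Rightarrow> bool" where
  "same_outside_subtree T \<nu> W c W' c' \<longleftrightarrow> (\<forall>\<kappa>\<in>T. \<not> \<kappa> \<subseteq> \<nu> \<longrightarrow> W' \<kappa> = W \<kappa> \<and> c' \<kappa> = c \<kappa>)"

locale hierarchical_tree =
  fixes N :: nat and T :: "nat set set"
  assumes tree: "mode_tree N T"
begin

lemma finite_tree: "finite T"
  using tree unfolding mode_tree_def by (meson finite_Pow_iff finite_atLeastAtMost finite_subset)

lemma node_subset: "\<mu> \<in> T \<Longrightarrow> \<mu> \<subseteq> {1..N}"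
  using tree by (auto simp: mode_tree_def)

lemma finite_node: "\<mu> \<in> T \<Longrightarrow> finite \<mu>"
  using node_subset finite_subset by blast

lemma node_nonempty: "\<mu> \<in> T \<Longrightarrow> \<mu> \<noteq> {}"
  using tree by (auto simp: mode_tree_def)

lemma laminar: "A \<in> T \<Longrightarrow> B \<in> T \<Longrightarrow> A \<subseteq> B \<or> B \<subseteq> A \<or> A \<inter> B = {}"
  using tree by (simp add: mode_tree_def)

lemma root_in_tree: "{1..N} \<in> T"
  using tree by (simp add: mode_tree_def)

lemma finite_children: "finite (children T \<mu>)"
  using finite_tree by (rule finite_subset[rotated]) (auto simp: children_def)

lemma card_node_ge1: "\<mu> \<in> T \<Longrightarrow> 1 \<le> card \<mu>"
  using finite_node node_nonempty by (simp add: Suc_le_eq card_gt_0_iff)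

lemma card_interior_ge2:
  assumes "\<nu> \<in> interior T"
  shows "2 \<le> card \<nu>"
proof -
  have "\<nu> \<in> T" "card \<nu> \<noteq> 1"
    using assms finite_node card_1_singletonE unfolding interior_def by auto
  then show ?thesis using card_node_ge1 by fastforce
qed

lemma children_disjoint:
  assumes "\<kappa>1 \<in> children T \<mu>" "\<kappa>2 \<in> children T \<mu>" "\<kappa>1 \<noteq> \<kappa>2"
  shows "\<kappa>1 \<inter> \<kappa>2 = {}"
proof -
  have "\<not> \<kappa>1 \<subset> \<kappa>2" "\<not> \<kappa>2 \<subset> \<kappa>1" using assms(1,2) unfolding children_def by auto
  then show ?thesis using laminar assms children_subset by (metis psubsetI)
qed

lemma ex_child_superset:
  assumes "\<nu> \<in> T" "\<nu> \<subset> \<mu>"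
  obtains \<kappa> where "\<kappa> \<in> children T \<mu>" "\<nu> \<subseteq> \<kappa>"
proof -
  let ?A = "{\<kappa>\<in>T. \<nu> \<subseteq> \<kappa> \<and> \<kappa> \<subset> \<mu>}"
  obtain m where m: "m \<in> ?A" "\<forall>b\<in>?A. m \<le> b \<longrightarrow> m = b"
    using finite_has_maximal2[of ?A \<nu>] finite_tree assms by auto
  then have "m \<in> children T \<mu>" unfolding children_def by auto
  then show ?thesis using m that by blast
qed

lemma parent_child:
  assumes "\<kappa> \<in> children T \<mu>" "\<mu> \<in> T"
  shows "parent T \<kappa> = \<mu>"
  unfolding parent_def
proof (rule the_equality)
  have \<kappa>: "\<kappa> \<in> T" "\<kappa> \<subset> \<mu>" "\<kappa> \<noteq> {}" using children_subset[OF assms(1)] node_nonempty by auto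
  have "\<mu> \<subseteq> \<kappa>'" if "\<kappa>' \<in> T" "\<kappa> \<subset> \<kappa>'" for \<kappa>'
  proof -
    have "\<not> \<kappa>' \<subset> \<mu>" using assms(1) that unfolding children_def by auto
    then show ?thesis using laminar[OF assms(2) that(1)] that \<kappa> by auto
  qed
  then show "\<mu> \<in> T \<and> \<kappa> \<subset> \<mu> \<and> (\<forall>\<kappa>'\<in>T. \<kappa> \<subset> \<kappa>' \<longrightarrow> \<mu> \<subseteq> \<kappa>')" using assms \<kappa> by auto
  fix \<kappa>' assume "\<kappa>' \<in> T \<and> \<kappa> \<subset> \<kappa>' \<and> (\<forall>\<kappa>''\<in>T. \<kappa> \<subset> \<kappa>'' \<longrightarrow> \<kappa>' \<subseteq> \<kappa>'')"
  moreover have "\<not> \<kappa>' \<subset> \<mu>" if "\<kappa>' \<in> T" "\<kappa> \<subset> \<kappa>'" using assms(1) that unfolding children_def by auto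
  ultimately show "\<kappa>' = \<mu>" using assms(2) \<kappa> by auto
qed

lemma prk_child:
  assumes "\<kappa> \<in> children T \<mu>" "\<mu> \<in> T"
  shows "prk N T R D \<kappa> = rk R D \<mu>"
  using parent_child[OF assms] children_subset[OF assms(1)] node_subset[OF assms(2)]
  by (auto simp: prk_def)

lemma tens_cong_sibling:
  assumes "\<kappa> \<in> children T \<mu>" "\<nu> \<subseteq> \<kappa>" "\<kappa>' \<in> children T \<mu>" "\<kappa>' \<noteq> \<kappa>"
    and "same_outside_subtree T \<nu> W c W' c'"
  shows "tens T rkf W' c' \<kappa>' r' i = tens T rkf W c \<kappa>' r' i"
proof -
  have "\<kappa> \<inter> \<kappa>' = {}" using children_disjoint assms(1,3,4) by blast
  then have "\<not> k \<subseteq> \<nu>" if "k \<in> T" "k \<subseteq> \<kappa>'" for k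
    using assms(2) node_nonempty[OF that(1)] that(2) by auto
  moreover have "\<kappa>' \<in> T" using children_subset assms(3) by blast
  ultimately show ?thesis
    using assms(5) unfolding same_outside_subtree_def by (intro tens_cong_subtree) auto
qed

lemma tens_linear_in_child:
  assumes "\<mu> \<in> T" "\<kappa> \<in> children T \<mu>" "\<nu> \<subseteq> \<kappa>"
    and same: "same_outside_subtree T \<nu> W c W' c'"
  shows "tens T rkf W' c' \<mu> r i = (\<Sum>r'<rkf \<mu>. c \<mu> r' * W \<mu> r' r *
      (\<Prod>\<kappa>'\<in>children T \<mu> - {\<kappa>}. tens T rkf W c \<kappa>' r' i) * tens T rkf W' c' \<kappa> r' i)"
proof -
  have "\<kappa> \<in> T" "\<kappa> \<subset> \<mu>" using children_subset[OF assms(2)] by auto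
  then have "card \<kappa> < card \<mu>" using psubset_card_mono finite_node assms(1) by blast
  then have "2 \<le> card \<mu>" using card_node_ge1[OF \<open>\<kappa> \<in> T\<close>] by linarith
  moreover have "W' \<mu> = W \<mu>" "c' \<mu> = c \<mu>"
    using same assms(1,3) \<open>\<kappa> \<subset> \<mu>\<close> unfolding same_outside_subtree_def by auto
  moreover have "(\<Prod>\<kappa>'\<in>children T \<mu>. tens T rkf W' c' \<kappa>' r' i) =
      tens T rkf W' c' \<kappa> r' i * (\<Prod>\<kappa>'\<in>children T \<mu> - {\<kappa>}. tens T rkf W c \<kappa>' r' i)" for r'
  proof -
    have "(\<Prod>\<kappa>'\<in>children T \<mu> - {\<kappa>}. tens T rkf W' c' \<kappa>' r' i)
        = (\<Prod>\<kappa>'\<in>children T \<mu> - {\<kappa>}. tens T rkf W c \<kappa>' r' i)"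
      using tens_cong_sibling[OF assms(2,3) _ _ same] by (intro prod.cong) auto
    then show ?thesis using assms(2) finite_children by (simp add: prod.remove)
  qed
  ultimately show ?thesis
    using finite_node[OF assms(1)] by (simp add: tens_node mult_ac)
qed

lemma tens_linear_in_descendant:
  assumes "\<nu> \<in> T" "\<mu> \<in> T" "\<nu> \<subseteq> \<mu>" "\<mu> = \<nu> \<Longrightarrow> r < prk N T R D \<nu>"
  shows "\<exists>\<Phi>. \<forall>W' c'. same_outside_subtree T \<nu> W c W' c' \<longrightarrow>
    tens T (rk R D) W' c' \<mu> r i = (\<Sum>r''<prk N T R D \<nu>. \<Phi> r'' * tens T (rk R D) W' c' \<nu> r'' i)"
  using assms(2-)
proof (induction "card \<mu>" arbitrary: \<mu> r rule: less_induct)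
  case less
  let ?P = "prk N T R D \<nu>"
  show ?case
  proof (cases "\<mu> = \<nu>")
    case True
    then have "{..<?P} \<inter> {r''. r'' = r} = {r}" using less.prems by auto
    then show ?thesis using True by (intro exI[of _ "\<lambda>r''. of_bool (r'' = r)"]) simp
  next
    case False
    then have "\<nu> \<subset> \<mu>" using less.prems by auto
    then obtain \<kappa> where \<kappa>: "\<kappa> \<in> children T \<mu>" "\<nu> \<subseteq> \<kappa>"
      using ex_child_superset assms(1) by blast
    have "\<kappa> \<in> T" "card \<kappa> < card \<mu>"
      using children_subset[OF \<kappa>(1)] finite_node less.prems(1) by (auto intro: psubset_card_mono)
    have "\<exists>\<Psi>. \<forall>W' c'. same_outside_subtree T \<nu> W c W' c' \<longrightarrow>
        tens T (rk R D) W' c' \<kappa> r' i = (\<Sum>r''<?P. \<Psi> r'' * tens T (rk R D) W' c' \<nu> r'' i)"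
      if "r' < rk R D \<mu>" for r'
      using that prk_child[OF \<kappa>(1) less.prems(1)]
      by (intro less.hyps[OF \<open>card \<kappa> < card \<mu>\<close> \<open>\<kappa> \<in> T\<close> \<kappa>(2)]) simp
    then obtain \<Psi> where \<Psi>: "\<And>r' W' c'. r' < rk R D \<mu> \<Longrightarrow> same_outside_subtree T \<nu> W c W' c' \<Longrightarrow>
        tens T (rk R D) W' c' \<kappa> r' i = (\<Sum>r''<?P. \<Psi> r' r'' * tens T (rk R D) W' c' \<nu> r'' i)"
      by metis
    define a where "a r' = c \<mu> r' * W \<mu> r' r *
      (\<Prod>\<kappa>'\<in>children T \<mu> - {\<kappa>}. tens T (rk R D) W c \<kappa>' r' i)" for r'
    show ?thesis
    proof (intro exI allI impI)
      fix W' c' assume same: "same_outside_subtree T \<nu> W c W' c'"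
      have "tens T (rk R D) W' c' \<mu> r i = (\<Sum>r'<rk R D \<mu>. a r' * tens T (rk R D) W' c' \<kappa> r' i)"
        using tens_linear_in_child[OF less.prems(1) \<kappa> same] by (simp add: a_def)
      also have "\<dots> = (\<Sum>r'<rk R D \<mu>. a r' * (\<Sum>r''<?P. \<Psi> r' r'' * tens T (rk R D) W' c' \<nu> r'' i))"
        using \<Psi> same by simp
      also have "\<dots> = (\<Sum>r''<?P. (\<Sum>r'<rk R D \<mu>. a r' * \<Psi> r' r'') * tens T (rk R D) W' c' \<nu> r'' i)"
        by (simp add: sum_distrib_left sum_distrib_right mult.assoc sum.swap[of _ "{..<?P}"])
      finally show "tens T (rk R D) W' c' \<mu> r i =
          (\<Sum>r''<?P. (\<Sum>r'<rk R D \<mu>. a r' * \<Psi> r' r'') * tens T (rk R D) W' c' \<nu> r'' i)" .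
    qed
  qed
qed

end

section \<open>The end tensor near a local component\<close>

lemma sum_fun_upd_mult:
  fixes f g :: "nat \<Rightarrow> 'a::comm_ring"
  assumes "r < n"
  shows "(\<Sum>k<n. (f(r := y)) k * g k) = (\<Sum>k<n. f k * g k) + (y - f r) * g r"
proof -
  have "(\<Sum>k<n. (f(r := y)) k * g k) = (\<Sum>k<n. f k * g k + (if k = r then (y - f r) * g k else 0))"
    by (intro sum.cong) (auto simp: algebra_simps)
  then show ?thesis using assms by (simp add: sum.distrib)
qed

abbreviation unscaled :: "nat set \<Rightarrow> nat \<Rightarrow> real" where
  "unscaled \<equiv> \<lambda>_ _. 1"

locale local_component = hierarchical_tree +
  fixes R :: "nat set \<Rightarrow> nat" and D :: "nat \<Rightarrow> nat"
    and W :: "nat set \<Rightarrow> nat \<Rightarrow> nat \<Rightarrow> real" and \<nu> :: "nat set" and r :: nat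
  assumes node: "\<nu> \<in> interior T" and r: "r < R \<nu>"
begin

lemma node_in_tree: "\<nu> \<in> T" and rk_node: "rk R D \<nu> = R \<nu>"
  using node by (auto simp: interior_def rk_def)

lemma tens_node_expansion:
  "tens T (rk R D) W' c' \<nu> r'' i =
    (\<Sum>r'<R \<nu>. c' \<nu> r' * W' \<nu> r' r'' * (\<Prod>\<kappa>\<in>children T \<nu>. tens T (rk R D) W' c' \<kappa> r' i))"
  using tens_node[OF finite_node[OF node_in_tree] card_interior_ge2[OF node]] rk_node
  by simp

definition outer_coeff :: "(nat \<Rightarrow> nat) \<Rightarrow> nat \<Rightarrow> real" where
  "outer_coeff = (SOME \<Phi>. \<forall>i W' c'. same_outside_subtree T \<nu> W unscaled W' c' \<longrightarrow>
     tens T (rk R D) W' c' {1..N} 0 i =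
       (\<Sum>r''<prk N T R D \<nu>. \<Phi> i r'' * tens T (rk R D) W' c' \<nu> r'' i))"

lemma tens_root_expansion:
  assumes "same_outside_subtree T \<nu> W unscaled W' c'"
  shows "tens T (rk R D) W' c' {1..N} 0 i =
    (\<Sum>r''<prk N T R D \<nu>. outer_coeff i r'' * tens T (rk R D) W' c' \<nu> r'' i)"
proof -
  have "\<forall>i. \<exists>\<Phi>. \<forall>W' c'. same_outside_subtree T \<nu> W unscaled W' c' \<longrightarrow>
      tens T (rk R D) W' c' {1..N} 0 i =
        (\<Sum>r''<prk N T R D \<nu>. \<Phi> r'' * tens T (rk R D) W' c' \<nu> r'' i)"
    using tens_linear_in_descendant[OF node_in_tree root_in_tree]
      node_subset[OF node_in_tree] by (simp add: prk_def)
  then have "\<exists>\<Phi>. \<forall>i W' c'. same_outside_subtree T \<nu> W unscaled W' c' \<longrightarrow>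
      tens T (rk R D) W' c' {1..N} 0 i =
        (\<Sum>r''<prk N T R D \<nu>. \<Phi> i r'' * tens T (rk R D) W' c' \<nu> r'' i)"
    by metis
  from someI_ex[OF this] show ?thesis using assms unfolding outer_coeff_def by blast
qed

lemma end_tensor_perturb_below:
  assumes "same_outside_subtree T \<nu> W unscaled W' unscaled"
    and "\<And>r''. r'' < prk N T R D \<nu> \<Longrightarrow>
      tens T (rk R D) W' unscaled \<nu> r'' i = tens T (rk R D) W unscaled \<nu> r'' i + h r''"
  shows "end_tensor N D T R W' i =
    end_tensor N D T R W i + (\<Sum>r''<prk N T R D \<nu>. outer_coeff i r'' * h r'')"
proof -
  have "same_outside_subtree T \<nu> W unscaled W unscaled"
    by (simp add: same_outside_subtree_def)
  from tens_root_expansion[OF this] show ?thesis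
    using tens_root_expansion[OF assms(1)] assms(2)
    by (simp add: end_tensor_def distrib_left sum.distrib)
qed

definition children_prod :: "nat \<Rightarrow> (nat \<Rightarrow> nat) \<Rightarrow> real" where
  "children_prod r' i = (\<Prod>\<kappa>\<in>children T \<nu>. tens T (rk R D) W unscaled \<kappa> r' i)"

text \<open>The part \<open>\<sigma> E\<close> of the end tensor contributed by the local component (see
  \<open>sigma_mult_E_tensor\<close>), written so that it needs no case distinction on \<open>\<sigma> = 0\<close>: the
  conservation law below must hold at all times, including those where \<open>\<sigma>\<close> vanishes.\<close>

definition component :: "(nat \<Rightarrow> nat) \<Rightarrow> real" where
  "component i = (\<Sum>r''<prk N T R D \<nu>. outer_coeff i r'' * W \<nu> r r'') * children_prod r i"

definition row_dir :: "nat \<Rightarrow> (nat \<Rightarrow> nat) \<Rightarrow> real" where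
  "row_dir b i = outer_coeff i b * children_prod r i"

lemma end_tensor_upd_row:
  assumes "b < prk N T R D \<nu>"
  shows "end_tensor N D T R (upd_entry W \<nu> r b x) i =
    end_tensor N D T R W i + (x - W \<nu> r b) * row_dir b i"
proof -
  let ?W' = "upd_entry W \<nu> r b x"
  have "tens T (rk R D) ?W' unscaled \<kappa> r' i = tens T (rk R D) W unscaled \<kappa> r' i"
    if "\<kappa> \<in> children T \<nu>" for \<kappa> r'
    using children_subset[OF that] by (intro tens_cong_subtree) (auto simp: upd_entry_def)
  then have "tens T (rk R D) ?W' unscaled \<nu> r'' i = (\<Sum>r'<R \<nu>.
      ((\<lambda>k. W \<nu> k r'')(r := if r'' = b then x else W \<nu> r r'')) r' * children_prod r' i)" for r''
    unfolding tens_node_expansion children_prod_def by (intro sum.cong) (auto simp: upd_entry_def)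
  moreover have "(\<Sum>r'<R \<nu>. ((\<lambda>k. W \<nu> k r'')(r := if r'' = b then x else W \<nu> r r'')) r' *
      children_prod r' i) = tens T (rk R D) W unscaled \<nu> r'' i +
      (if r'' = b then (x - W \<nu> r b) * children_prod r i else 0)" for r''
    unfolding sum_fun_upd_mult[OF r] by (simp add: tens_node_expansion children_prod_def)
  ultimately have "end_tensor N D T R ?W' i = end_tensor N D T R W i + (\<Sum>r''<prk N T R D \<nu>.
      outer_coeff i r'' * (if r'' = b then (x - W \<nu> r b) * children_prod r i else 0))"
    by (intro end_tensor_perturb_below) (auto simp: same_outside_subtree_def upd_entry_def)
  also have "\<dots> = end_tensor N D T R W i + (x - W \<nu> r b) * row_dir b i"
    using assms by (simp add: row_dir_def if_distrib[of "(*) _"] sum.delta cong: if_cong)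
  finally show ?thesis .
qed

definition child_dir :: "nat set \<Rightarrow> nat \<Rightarrow> (nat \<Rightarrow> nat) \<Rightarrow> real" where
  "child_dir \<kappa> a i = (if card \<kappa> = 1 then of_bool (i (the_elem \<kappa>) = a)
     else \<Prod>k\<in>children T \<kappa>. tens T (rk R D) W unscaled k a i)"

lemma tens_upd_child:
  assumes "\<kappa> \<in> children T \<nu>" "a < rk R D \<kappa>"
  shows "tens T (rk R D) (upd_entry W \<kappa> a r x) unscaled \<kappa> r' i =
    tens T (rk R D) W unscaled \<kappa> r' i + (if r' = r then (x - W \<kappa> a r) * child_dir \<kappa> a i else 0)"
proof -
  let ?W' = "upd_entry W \<kappa> a r x"
  have "\<kappa> \<in> T" using children_subset assms(1) by blast
  then have fin: "finite \<kappa>" by (rule finite_node)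
  show ?thesis
  proof (cases "card \<kappa> = 1")
    case True
    then show ?thesis using fin by (auto simp: tens_leaf child_dir_def upd_entry_def)
  next
    case False
    then have "2 \<le> card \<kappa>" using card_node_ge1[OF \<open>\<kappa> \<in> T\<close>] by linarith
    have "tens T (rk R D) ?W' unscaled k a' i = tens T (rk R D) W unscaled k a' i"
      if "k \<in> children T \<kappa>" for k a'
      using children_subset[OF that] by (intro tens_cong_subtree) (auto simp: upd_entry_def)
    then have "tens T (rk R D) ?W' unscaled \<kappa> r' i = (\<Sum>a'<rk R D \<kappa>.
        ((\<lambda>k. W \<kappa> k r')(a := if r' = r then x else W \<kappa> a r')) a' *
        (\<Prod>k\<in>children T \<kappa>. tens T (rk R D) W unscaled k a' i))"
      unfolding tens_node[OF fin \<open>2 \<le> card \<kappa>\<close>] by (intro sum.cong) (auto simp: upd_entry_def)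
    also have "\<dots> = tens T (rk R D) W unscaled \<kappa> r' i +
        (if r' = r then (x - W \<kappa> a r) * child_dir \<kappa> a i else 0)"
      unfolding sum_fun_upd_mult[OF assms(2)] using False
      by (simp add: tens_node[OF fin \<open>2 \<le> card \<kappa>\<close>] child_dir_def)
    finally show ?thesis .
  qed
qed

definition col_dir :: "nat set \<Rightarrow> nat \<Rightarrow> (nat \<Rightarrow> nat) \<Rightarrow> real" where
  "col_dir \<kappa> a i = (\<Sum>r''<prk N T R D \<nu>. outer_coeff i r'' * W \<nu> r r'') * child_dir \<kappa> a i *
     (\<Prod>k\<in>children T \<nu> - {\<kappa>}. tens T (rk R D) W unscaled k r i)"

lemma end_tensor_upd_col:
  assumes \<kappa>: "\<kappa> \<in> children T \<nu>" and a: "a < rk R D \<kappa>"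
  shows "end_tensor N D T R (upd_entry W \<kappa> a r x) i =
    end_tensor N D T R W i + (x - W \<kappa> a r) * col_dir \<kappa> a i"
proof -
  let ?W' = "upd_entry W \<kappa> a r x"
  let ?others = "\<lambda>r'. \<Prod>k\<in>children T \<nu> - {\<kappa>}. tens T (rk R D) W unscaled k r' i"
  let ?\<delta> = "(x - W \<kappa> a r) * child_dir \<kappa> a i * ?others r"
  have "\<kappa> \<subset> \<nu>" using children_subset[OF \<kappa>] by blast
  have same: "same_outside_subtree T \<kappa> W unscaled ?W' unscaled"
    and same0: "same_outside_subtree T \<kappa> W unscaled W unscaled"
    by (auto simp: same_outside_subtree_def upd_entry_def)
  have "tens T (rk R D) ?W' unscaled \<nu> r'' i = tens T (rk R D) W unscaled \<nu> r'' i + W \<nu> r r'' * ?\<delta>"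
    for r''
  proof -
    have "tens T (rk R D) ?W' unscaled \<nu> r'' i =
        (\<Sum>r'<R \<nu>. W \<nu> r' r'' * ?others r' * tens T (rk R D) ?W' unscaled \<kappa> r' i)"
      using tens_linear_in_child[OF node_in_tree \<kappa> subset_refl same] by (simp add: rk_node)
    also have "\<dots> = (\<Sum>r'<R \<nu>. W \<nu> r' r'' * ?others r' * tens T (rk R D) W unscaled \<kappa> r' i +
        (if r' = r then W \<nu> r r'' * ?\<delta> else 0))"
      by (intro sum.cong) (auto simp: tens_upd_child[OF \<kappa> a] algebra_simps)
    also have "\<dots> = tens T (rk R D) W unscaled \<nu> r'' i + W \<nu> r r'' * ?\<delta>"
      using r tens_linear_in_child[OF node_in_tree \<kappa> subset_refl same0]
      by (simp add: sum.distrib rk_node)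
    finally show ?thesis .
  qed
  then have "end_tensor N D T R ?W' i = end_tensor N D T R W i +
      (\<Sum>r''<prk N T R D \<nu>. outer_coeff i r'' * (W \<nu> r r'' * ?\<delta>))"
    using \<open>\<kappa> \<subset> \<nu>\<close>
    by (intro end_tensor_perturb_below) (auto simp: same_outside_subtree_def upd_entry_def)
  also have "\<dots> = end_tensor N D T R W i + (x - W \<kappa> a r) * col_dir \<kappa> a i"
    by (simp add: col_dir_def sum_distrib_left mult_ac)
  finally show ?thesis .
qed

lemma sum_row_dir: "(\<Sum>b<prk N T R D \<nu>. W \<nu> r b * row_dir b i) = component i"
  by (simp add: row_dir_def component_def sum_distrib_left mult_ac)

lemma sum_child_dir:
  assumes "\<kappa> \<in> children T \<nu>" and i: "i \<in> tidx N D"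
  shows "(\<Sum>a<rk R D \<kappa>. W \<kappa> a r * child_dir \<kappa> a i) = tens T (rk R D) W unscaled \<kappa> r i"
proof -
  have "\<kappa> \<in> T" using children_subset assms(1) by blast
  then have fin: "finite \<kappa>" by (rule finite_node)
  show ?thesis
  proof (cases "card \<kappa> = 1")
    case True
    then obtain n where n: "\<kappa> = {n}" by (metis card_1_singletonE)
    then have "i n < D n" using i node_subset[OF \<open>\<kappa> \<in> T\<close>] by (auto simp: tidx_def PiE_def Pi_def)
    moreover have "{..<D n} \<inter> {a. i n = a} = {i n}" using \<open>i n < D n\<close> by auto
    ultimately show ?thesis using n by (simp add: child_dir_def tens_leaf rk_def)
  next
    case False
    then have "2 \<le> card \<kappa>" using card_node_ge1[OF \<open>\<kappa> \<in> T\<close>] by linarith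
    then show ?thesis using False fin by (simp add: tens_node child_dir_def)
  qed
qed

lemma sum_col_dir:
  assumes \<kappa>: "\<kappa> \<in> children T \<nu>" and "i \<in> tidx N D"
  shows "(\<Sum>a<rk R D \<kappa>. W \<kappa> a r * col_dir \<kappa> a i) = component i"
proof -
  have "children_prod r i = tens T (rk R D) W unscaled \<kappa> r i *
      (\<Prod>k\<in>children T \<nu> - {\<kappa>}. tens T (rk R D) W unscaled k r i)"
    unfolding children_prod_def using \<kappa> finite_children by (simp add: prod.remove)
  moreover have "(\<Sum>a<rk R D \<kappa>. W \<kappa> a r * col_dir \<kappa> a i) =
      (\<Sum>a<rk R D \<kappa>. W \<kappa> a r * child_dir \<kappa> a i) *
      ((\<Sum>r''<prk N T R D \<nu>. outer_coeff i r'' * W \<nu> r r'') *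
       (\<Prod>k\<in>children T \<nu> - {\<kappa>}. tens T (rk R D) W unscaled k r i))"
    by (simp add: col_dir_def sum_distrib_right mult_ac)
  ultimately show ?thesis by (simp add: sum_child_dir[OF assms] component_def mult_ac)
qed

lemma sigma_mult_E_tensor:
  assumes "sigma N T R D W \<nu> r \<noteq> 0"
  shows "sigma N T R D W \<nu> r * E_tensor N D T R W \<nu> r i = component i"
proof -
  let ?\<sigma> = "sigma N T R D W \<nu> r"
  define c where "c \<mu> r' = (if \<mu> = \<nu> then (if r' = r then 1 / ?\<sigma> else 0) else 1)" for \<mu> r'
  have E: "E_tensor N D T R W \<nu> r = tens T (rk R D) W c {1..N} 0"
    using assms unfolding E_tensor_def c_def by simp
  have "tens T (rk R D) W c \<kappa> r' i = tens T (rk R D) W unscaled \<kappa> r' i"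
    if "\<kappa> \<in> children T \<nu>" for \<kappa> r'
    using children_subset[OF that] by (intro tens_cong_subtree) (auto simp: c_def fun_eq_iff)
  then have "tens T (rk R D) W c \<nu> r'' i =
      (\<Sum>r'<R \<nu>. if r' = r then W \<nu> r r'' / ?\<sigma> * children_prod r i else 0)" for r''
    unfolding tens_node_expansion children_prod_def by (intro sum.cong) (auto simp: c_def)
  then have "tens T (rk R D) W c \<nu> r'' i = W \<nu> r r'' / ?\<sigma> * children_prod r i" for r''
    using r by simp
  moreover have "same_outside_subtree T \<nu> W unscaled W c"
    by (auto simp: same_outside_subtree_def c_def fun_eq_iff)
  ultimately have "E_tensor N D T R W \<nu> r i =
      (\<Sum>r''<prk N T R D \<nu>. outer_coeff i r'' * (W \<nu> r r'' / ?\<sigma> * children_prod r i))"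
    unfolding E using tens_root_expansion by simp
  then show ?thesis using assms
    by (simp add: component_def sum_distrib_left sum_distrib_right mult_ac)
qed

end

lemma local_componentI: "mode_tree N T \<Longrightarrow> \<nu> \<in> interior T \<Longrightarrow> r < R \<nu> \<Longrightarrow> local_component N T R \<nu> r"
  by (simp add: local_component_def local_component_axioms_def hierarchical_tree_def)

section \<open>Gradient flow on a local component\<close>

definition LC_sqnorm :: "nat \<Rightarrow> nat set set \<Rightarrow> (nat set \<Rightarrow> nat) \<Rightarrow> (nat \<Rightarrow> nat)
    \<Rightarrow> (nat set \<Rightarrow> nat \<Rightarrow> nat \<Rightarrow> real) \<Rightarrow> nat set \<Rightarrow> nat \<Rightarrow> nat set \<Rightarrow> real" where
  "LC_sqnorm N T R D W \<nu> r j = (if j = \<nu> then row_sqnorm N T R D W \<nu> r else col_sqnorm R D W j r)"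

lemma has_real_derivative_sum_squares:
  assumes "\<And>b. b \<in> S \<Longrightarrow> (w b has_real_derivative w' b) (at s within A)"
  shows "((\<lambda>s. \<Sum>b\<in>S. (w b s)\<^sup>2) has_real_derivative (\<Sum>b\<in>S. 2 * w b s * w' b)) (at s within A)"
  using assms by (auto intro!: DERIV_sum derivative_eq_intros)

lemma gradient_flow_entry_has_derivative:
  assumes L_grad: "\<forall>X. has_tgrad N D L (G X) X" and flow: "gradient_flow N D T R L W"
    and "0 \<le> s" "\<mu> \<in> T" "a < rk R D \<mu>" "b < prk N T R D \<mu>"
    and affine: "\<And>x i. end_tensor N D T R (upd_entry (W s) \<mu> a b x) i =
      end_tensor N D T R (W s) i + (x - W s \<mu> a b) * V i"
  shows "((\<lambda>s. W s \<mu> a b) has_real_derivative - tinner N D (G (end_tensor N D T R (W s))) V)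
    (at s within {0..})"
proof -
  obtain d where d: "((\<lambda>s. W s \<mu> a b) has_real_derivative d) (at s within {0..})"
    "((\<lambda>x. L (end_tensor N D T R (upd_entry (W s) \<mu> a b x))) has_real_derivative - d)
       (at (W s \<mu> a b))"
    using flow assms(3-6) unfolding gradient_flow_def by blast
  have "(\<lambda>x. L (end_tensor N D T R (upd_entry (W s) \<mu> a b x))) =
      (\<lambda>x. L (\<lambda>i. end_tensor N D T R (W s) i + (x - W s \<mu> a b) * V i))"
    by (simp add: affine[abs_def])
  then have "((\<lambda>x. L (end_tensor N D T R (upd_entry (W s) \<mu> a b x))) has_real_derivative
      tinner N D (G (end_tensor N D T R (W s))) V) (at (W s \<mu> a b))"
    using has_tgrad_line_derivative L_grad by simp
  then have "- d = tinner N D (G (end_tensor N D T R (W s))) V"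
    using DERIV_unique[OF d(2)] by blast
  then show ?thesis using d(1) by (metis minus_minus)
qed

context local_component
begin

lemma LC_sqnorm_nonneg: "0 \<le> LC_sqnorm N T R D W \<nu> r j"
  by (simp add: LC_sqnorm_def row_sqnorm_def col_sqnorm_def sum_nonneg)

lemma node_notin_children: "\<nu> \<notin> children T \<nu>"
  using children_subset by blast

lemma sigma_eq_prod_sqrt_LC_sqnorm:
  "sigma N T R D W \<nu> r = (\<Prod>j\<in>insert \<nu> (children T \<nu>). sqrt (LC_sqnorm N T R D W \<nu> r j))"
proof -
  have "(\<Prod>\<mu>\<in>children T \<nu>. sqrt (col_sqnorm R D W \<mu> r)) =
      (\<Prod>j\<in>children T \<nu>. sqrt (LC_sqnorm N T R D W \<nu> r j))"
    using node_notin_children by (intro prod.cong) (auto simp: LC_sqnorm_def)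
  then show ?thesis
    using node_notin_children finite_children by (simp add: sigma_def LC_sqnorm_def)
qed

lemma LC_sqnorm_pos:
  assumes "0 < sigma N T R D W \<nu> r" "j \<in> insert \<nu> (children T \<nu>)"
  shows "0 < LC_sqnorm N T R D W \<nu> r j"
proof -
  have "(\<Prod>j\<in>insert \<nu> (children T \<nu>). sqrt (LC_sqnorm N T R D W \<nu> r j)) \<noteq> 0"
    using assms(1) sigma_eq_prod_sqrt_LC_sqnorm by simp
  then have "LC_sqnorm N T R D W \<nu> r j \<noteq> 0" using assms(2) finite_children by force
  then show ?thesis using LC_sqnorm_nonneg by (simp add: less_le)
qed

lemma prod_LC_sqnorm:
  "(\<Prod>j\<in>insert \<nu> (children T \<nu>). LC_sqnorm N T R D W \<nu> r j) = (sigma N T R D W \<nu> r)\<^sup>2"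
  unfolding sigma_eq_prod_sqrt_LC_sqnorm prod_power_distrib
  using LC_sqnorm_nonneg by (intro prod.cong) auto

lemma LC_sqnorm_diff_le_unbalancedness:
  assumes "j \<in> insert \<nu> (children T \<nu>)" "k \<in> insert \<nu> (children T \<nu>)"
  shows "\<bar>LC_sqnorm N T R D W \<nu> r j - LC_sqnorm N T R D W \<nu> r k\<bar> \<le> unbalancedness N T R D W"
proof -
  let ?LC = "LC_sqnorms N T R D W"
  let ?S = "{\<bar>a - b\<bar> | \<nu> r a b. \<nu> \<in> interior T \<and> r < R \<nu> \<and> a \<in> ?LC \<nu> r \<and> b \<in> ?LC \<nu> r}"
  have "LC_sqnorm N T R D W \<nu> r j' \<in> ?LC \<nu> r" if "j' \<in> insert \<nu> (children T \<nu>)" for j'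
    using that by (auto simp: LC_sqnorm_def LC_sqnorms_def)
  then have "\<bar>LC_sqnorm N T R D W \<nu> r j - LC_sqnorm N T R D W \<nu> r k\<bar> \<in> ?S"
    using assms node r by blast
  moreover have "finite ?S"
  proof -
    let ?U = "\<Union>\<mu>\<in>interior T. \<Union>r'\<in>{..<R \<mu>}. ?LC \<mu> r'"
    have "finite (interior T)" using finite_tree by (simp add: interior_def)
    then have "finite ?U" using finite_children by (simp add: LC_sqnorms_def)
    moreover have "?S \<subseteq> (\<lambda>(a, b). \<bar>a - b\<bar>) ` (?U \<times> ?U)" by (fastforce simp: image_iff)
    ultimately show ?thesis by (meson finite_SigmaI finite_imageI finite_subset)
  qed
  ultimately show ?thesis unfolding unbalancedness_def by (simp add: Max_ge)
qed

end

context
  fixes N :: nat and D :: "nat \<Rightarrow> nat" and T :: "nat set set" and R :: "nat set \<Rightarrow> nat"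
    and L :: "((nat \<Rightarrow> nat) \<Rightarrow> real) \<Rightarrow> real"
    and G :: "((nat \<Rightarrow> nat) \<Rightarrow> real) \<Rightarrow> ((nat \<Rightarrow> nat) \<Rightarrow> real)"
    and W :: "real \<Rightarrow> nat set \<Rightarrow> nat \<Rightarrow> nat \<Rightarrow> real" and \<nu> :: "nat set" and r :: nat
  assumes lc: "local_component N T R \<nu> r"
    and L_grad: "\<forall>X. has_tgrad N D L (G X) X" and flow: "gradient_flow N D T R L W"
begin

lemma row_sqnorm_has_derivative:
  assumes "0 \<le> s"
  shows "((\<lambda>s. row_sqnorm N T R D (W s) \<nu> r) has_real_derivative
    - 2 * tinner N D (G (end_tensor N D T R (W s))) (local_component.component N T R D (W s) \<nu> r))
    (at s within {0..})"
proof -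
  interpret local_component N T R D "W s" \<nu> r by (rule lc)
  let ?G = "G (end_tensor N D T R (W s))"
  have "((\<lambda>s. W s \<nu> r b) has_real_derivative - tinner N D ?G (row_dir b)) (at s within {0..})"
    if "b \<in> {..<prk N T R D \<nu>}" for b
    using that r end_tensor_upd_row
    by (intro gradient_flow_entry_has_derivative[OF L_grad flow assms node_in_tree]) (auto simp: rk_node)
  then have "((\<lambda>s. row_sqnorm N T R D (W s) \<nu> r) has_real_derivative
      (\<Sum>b<prk N T R D \<nu>. 2 * W s \<nu> r b * - tinner N D ?G (row_dir b))) (at s within {0..})"
    unfolding row_sqnorm_def by (rule has_real_derivative_sum_squares)
  moreover have "component = (\<lambda>i. \<Sum>b<prk N T R D \<nu>. W s \<nu> r b * row_dir b i)"
    by (simp add: sum_row_dir)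
  then have "tinner N D ?G component = (\<Sum>b<prk N T R D \<nu>. W s \<nu> r b * tinner N D ?G (row_dir b))"
    by (simp add: tinner_sum_right)
  ultimately show ?thesis by (simp add: sum_distrib_left mult.assoc)
qed

lemma col_sqnorm_has_derivative:
  assumes "0 \<le> s" and \<kappa>: "\<kappa> \<in> children T \<nu>"
  shows "((\<lambda>s. col_sqnorm R D (W s) \<kappa> r) has_real_derivative
    - 2 * tinner N D (G (end_tensor N D T R (W s))) (local_component.component N T R D (W s) \<nu> r))
    (at s within {0..})"
proof -
  interpret local_component N T R D "W s" \<nu> r by (rule lc)
  let ?G = "G (end_tensor N D T R (W s))"
  have "\<kappa> \<in> T" "prk N T R D \<kappa> = R \<nu>"
    using children_subset[OF \<kappa>] prk_child[OF \<kappa> node_in_tree] rk_node by auto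
  then have "((\<lambda>s. W s \<kappa> a r) has_real_derivative - tinner N D ?G (col_dir \<kappa> a)) (at s within {0..})"
    if "a \<in> {..<rk R D \<kappa>}" for a
    using that r end_tensor_upd_col[OF \<kappa>] by (intro gradient_flow_entry_has_derivative[OF L_grad flow assms(1)]) auto
  then have "((\<lambda>s. col_sqnorm R D (W s) \<kappa> r) has_real_derivative
      (\<Sum>a<rk R D \<kappa>. 2 * W s \<kappa> a r * - tinner N D ?G (col_dir \<kappa> a))) (at s within {0..})"
    unfolding col_sqnorm_def by (rule has_real_derivative_sum_squares)
  moreover have "tinner N D ?G component = tinner N D ?G (\<lambda>i. \<Sum>a<rk R D \<kappa>. W s \<kappa> a r * col_dir \<kappa> a i)"
    by (rule tinner_cong_right) (simp add: sum_col_dir[OF \<kappa>])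
  then have "tinner N D ?G component = (\<Sum>a<rk R D \<kappa>. W s \<kappa> a r * tinner N D ?G (col_dir \<kappa> a))"
    by (simp add: tinner_sum_right)
  ultimately show ?thesis by (simp add: sum_distrib_left mult.assoc)
qed

lemma LC_sqnorm_has_derivative:
  assumes "0 \<le> s" "j \<in> insert \<nu> (children T \<nu>)"
  shows "((\<lambda>s. LC_sqnorm N T R D (W s) \<nu> r j) has_real_derivative
    - 2 * tinner N D (G (end_tensor N D T R (W s))) (local_component.component N T R D (W s) \<nu> r))
    (at s within {0..})"
  using assms row_sqnorm_has_derivative col_sqnorm_has_derivative
    local_component.node_notin_children[OF lc]
  by (cases "j = \<nu>") (auto simp: LC_sqnorm_def)

lemma LC_sqnorm_diff_eq_initial:
  assumes "0 \<le> t" "j \<in> insert \<nu> (children T \<nu>)" "k \<in> insert \<nu> (children T \<nu>)"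
  shows "LC_sqnorm N T R D (W t) \<nu> r j - LC_sqnorm N T R D (W t) \<nu> r k =
    LC_sqnorm N T R D (W 0) \<nu> r j - LC_sqnorm N T R D (W 0) \<nu> r k"
  using assms LC_sqnorm_has_derivative by (intro diff_eq_if_equal_derivatives) auto

lemma LC_sqnorm_has_derivative_E_tensor:
  assumes "0 \<le> s" "j \<in> insert \<nu> (children T \<nu>)" "0 < sigma N T R D (W s) \<nu> r"
  shows "((\<lambda>s. LC_sqnorm N T R D (W s) \<nu> r j) has_real_derivative
    2 * sigma N T R D (W s) \<nu> r *
      tinner N D (\<lambda>i. - G (end_tensor N D T R (W s)) i) (E_tensor N D T R (W s) \<nu> r))
    (at s within {0..})"
proof -
  interpret local_component N T R D "W s" \<nu> r by (rule lc)
  have "component = (\<lambda>i. sigma N T R D (W s) \<nu> r * E_tensor N D T R (W s) \<nu> r i)"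
    using sigma_mult_E_tensor assms(3) by (simp add: fun_eq_iff)
  then show ?thesis
    using LC_sqnorm_has_derivative[OF assms(1,2)] by (simp add: tinner_scale_right tinner_uminus_left mult.assoc)
qed

lemma sigma_has_derivative:
  assumes "0 \<le> t" "0 < sigma N T R D (W t) \<nu> r"
  shows "((\<lambda>s. sigma N T R D (W s) \<nu> r) has_real_derivative
    tinner N D (\<lambda>i. - G (end_tensor N D T R (W t)) i) (E_tensor N D T R (W t) \<nu> r) *
    (\<Sum>j\<in>insert \<nu> (children T \<nu>). \<Prod>k\<in>insert \<nu> (children T \<nu>) - {j}. LC_sqnorm N T R D (W t) \<nu> r k))
    (at t within {0..})"
proof -
  interpret local_component N T R D "W t" \<nu> r by (rule lc)
  note sigma_eq = local_component.sigma_eq_prod_sqrt_LC_sqnorm[OF lc]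
  show ?thesis
    unfolding sigma_eq
    by (rule has_real_derivative_prod_sqrt[where q="\<lambda>j s. LC_sqnorm N T R D (W s) \<nu> r j"])
      (use finite_children LC_sqnorm_pos[OF assms(2)]
        LC_sqnorm_has_derivative_E_tensor[OF assms(1) _ assms(2)] sigma_eq in auto)
qed

lemma LC_sqnorm_le_root_sigma_add:
  assumes "0 \<le> t" "0 < sigma N T R D (W t) \<nu> r" "j \<in> insert \<nu> (children T \<nu>)"
  shows "LC_sqnorm N T R D (W t) \<nu> r j \<le>
    sigma N T R D (W t) \<nu> r powr (2 / card (insert \<nu> (children T \<nu>))) + unbalancedness N T R D (W 0)"
proof -
  interpret local_component N T R D "W t" \<nu> r by (rule lc)
  let ?J = "insert \<nu> (children T \<nu>)"
  let ?q = "LC_sqnorm N T R D (W t) \<nu> r"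
  have "\<forall>j\<in>?J. \<forall>k\<in>?J. \<bar>?q j - ?q k\<bar> \<le> unbalancedness N T R D (W 0)"
    using LC_sqnorm_diff_eq_initial[OF assms(1)]
      local_component.LC_sqnorm_diff_le_unbalancedness[OF lc] by metis
  moreover have "sigma N T R D (W t) \<nu> r powr 2 = prod ?q ?J"
    using assms(2) prod_LC_sqnorm powr_realpow[of _ 2] by simp
  then have "sigma N T R D (W t) \<nu> r powr (2 / card ?J) = prod ?q ?J powr (1 / card ?J)"
    by (simp add: powr_powr flip: \<open>sigma N T R D (W t) \<nu> r powr 2 = prod ?q ?J\<close>)
  ultimately show ?thesis
    using le_root_prod_add_if_pairwise_close[of ?J ?q] assms(3) LC_sqnorm_pos[OF assms(2)] finite_children
    by simp
qed

end

theorem theorem2: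
  fixes N :: nat and D :: "nat \<Rightarrow> nat" and T :: "nat set set" and R :: "nat set \<Rightarrow> nat"
    and L :: "((nat \<Rightarrow> nat) \<Rightarrow> real) \<Rightarrow> real"
    and G :: "((nat \<Rightarrow> nat) \<Rightarrow> real) \<Rightarrow> ((nat \<Rightarrow> nat) \<Rightarrow> real)"
    and W :: "real \<Rightarrow> nat set \<Rightarrow> nat \<Rightarrow> nat \<Rightarrow> real"
    and \<epsilon> :: real and \<nu> :: "nat set" and r :: nat and t :: real
  assumes tree: "mode_tree N T"
    and dims: "\<forall>n\<in>{1..N}. 0 < D n"
    and ranks: "\<forall>\<mu>\<in>interior T. 0 < R \<mu>"
    and L_nonneg: "\<forall>X. 0 \<le> L X"
    and L_grad: "\<forall>X. has_tgrad N D L (G X) X"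
    and L_smooth: "locally_smooth_grad N D G"
    and flow: "gradient_flow N D T R L W"
    and eps: "0 \<le> \<epsilon>" "unbalancedness N T R D (W 0) = \<epsilon>"
    and node: "\<nu> \<in> interior T" "r < R \<nu>"
    and time: "0 \<le> t"
    and pos: "0 < sigma N T R D (W t) \<nu> r"
  shows "\<exists>d. ((\<lambda>s. sigma N T R D (W s) \<nu> r) has_real_derivative d) (at t within {0..}) \<and>
    (let \<sigma> = sigma N T R D (W t) \<nu> r;
         Lv = card (children T \<nu>) + 1;
         g = tinner N D (\<lambda>i. - G (end_tensor N D T R (W t)) i) (E_tensor N D T R (W t) \<nu> r)
     in (0 \<le> g \<longrightarrow>
           \<sigma>\<^sup>2 / (\<sigma> powr (2 / real Lv) + \<epsilon>) * real Lv * g \<le> d \<and>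
           d \<le> (\<sigma> powr (2 / real Lv) + \<epsilon>) ^ (Lv - 1) * real Lv * g) \<and>
        (g < 0 \<longrightarrow>
           (\<sigma> powr (2 / real Lv) + \<epsilon>) ^ (Lv - 1) * real Lv * g \<le> d \<and>
           d \<le> \<sigma>\<^sup>2 / (\<sigma> powr (2 / real Lv) + \<epsilon>) * real Lv * g))"
proof -
  \<comment> \<open>The hypotheses \<open>dims\<close>, \<open>ranks\<close>, \<open>L_nonneg\<close> and \<open>L_smooth\<close> only serve to make the flow exist.\<close>
  have lc: "local_component N T R \<nu> r" by (intro local_componentI tree node)
  interpret local_component N T R D "W t" \<nu> r by (rule lc)
  let ?J = "insert \<nu> (children T \<nu>)"
  let ?q = "LC_sqnorm N T R D (W t) \<nu> r"
  define g where "g = tinner N D (\<lambda>i. - G (end_tensor N D T R (W t)) i) (E_tensor N D T R (W t) \<nu> r)"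
  have J: "finite ?J" "card ?J = card (children T \<nu>) + 1"
    using finite_children node_notin_children by simp_all
  have "\<forall>j\<in>?J. 0 < ?q j" "\<forall>j\<in>?J. ?q j \<le> sigma N T R D (W t) \<nu> r powr (2 / card ?J) + \<epsilon>"
    using LC_sqnorm_pos[OF pos] LC_sqnorm_le_root_sigma_add[OF lc L_grad flow time pos] eps(2)
    by auto
  note bounds = sum_prod_remove_bounds[OF J(1) this, unfolded prod_LC_sqnorm]
  show ?thesis
    using sigma_has_derivative[OF lc L_grad flow time pos, folded g_def]
      mult_right_mono[OF bounds(1), of g] mult_right_mono[OF bounds(2), of g]
      mult_right_mono_neg[OF bounds(1), of g] mult_right_mono_neg[OF bounds(2), of g]
    unfolding Let_def g_def[symmetric]
    by (intro exI[of _ "g * (\<Sum>j\<in>?J. prod ?q (?J - {j}))"]) (simp add: J(2) mult.commute[of g])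
qed

end
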